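(* Let $\mathbb{X},\mathbb{Y}$ be real Banach spaces such that $\operatorname{Sm}\mathbb{X}$ is dense in $\mathbb{X}$. If a non-zero bounded linear operator $T:\mathbb{X}\to\mathbb{Y}$ preserves Birkhoff–James orthogonality at each $x\in\operatorname{Sm}\mathbb{X}$, then $T$ is injective.
   Context: $u\perp_B v$ means $\|u+\lambda v\|\ge\|u\|$ for all real $\lambda$. $T$ preserves Birkhoff–James orthogonality at $x$ if $x\perp_B v$ implies $Tx\perp_B Tv$ for all $v\in\mathbb{X}$. For non-zero $z$, $J(z)=\{f\in\mathbb{X}^*:\|f\|=1,\ f(z)=\|z\|\}$; $z$ is smooth if $J(z)$ is a singleton; $\operatorname{Sm}\mathbb{X}$ is the set of smooth points. *)

theory Defs
  imports "HOL-Analysis.Analysis"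
begin

definition bj_orth :: "'a::real_normed_vector \<Rightarrow> 'a \<Rightarrow> bool" where
  "bj_orth u v \<longleftrightarrow> (\<forall>t::real. norm (u + t *\<^sub>R v) \<ge> norm u)"

definition preserves_bj_at :: "('a::real_normed_vector \<Rightarrow> 'b::real_normed_vector) \<Rightarrow> 'a \<Rightarrow> bool" where
  "preserves_bj_at T x \<longleftrightarrow> (\<forall>v. bj_orth x v \<longrightarrow> bj_orth (T x) (T v))"

definition support_functionals :: "'a::real_normed_vector \<Rightarrow> ('a \<Rightarrow> real) set" where
  "support_functionals z = {f. bounded_linear f \<and> onorm f = 1 \<and> f z = norm z}"

definition smooth_point :: "'a::real_normed_vector \<Rightarrow> bool" where
  "smooth_point z \<longleftrightarrow> z \<noteq> 0 \<and> (\<exists>f. support_functionals z = {f})"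

definition smooth_points :: "'a::real_normed_vector set" where
  "smooth_points = {z. smooth_point z}"

end

theory Submission
  imports Defs
begin

(* Suppose T v = 0 with v \<noteq> 0. If x is a smooth point close to v, its support functional f
   has f v > 0, so x is orthogonal to v - a x for a = f v / norm x \<noteq> 0. Preservation at x gives
   T x orthogonal to T (v - a x) = -a T x, which forces T x = 0. So T vanishes on the smooth points
   of a ball around v, by density and continuity on the whole ball, and by linearity everywhere. *)

lemma bj_orth_scaleR_self:
  assumes "bj_orth u (c *\<^sub>R u)" and "c \<noteq> 0"
  shows "u = 0"
proof -
  have "norm (u + (- 1 / c) *\<^sub>R (c *\<^sub>R u)) \<ge> norm u"
    using assms(1) unfolding bj_orth_def by blast
  with assms(2) show ?thesis by simp
qed

lemma bj_orth_if_support_functional_eq_0: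
  assumes "f \<in> support_functionals x" and "f y = 0"
  shows "bj_orth x y"
  unfolding bj_orth_def
proof
  fix t :: real
  from assms(1) have f: "bounded_linear f" "onorm f = 1" "f x = norm x"
    unfolding support_functionals_def by auto
  interpret f: bounded_linear f by fact
  have "norm x = f (x + t *\<^sub>R y)"
    using f assms(2) by (simp add: f.add f.scale)
  also have "\<dots> \<le> onorm f * norm (x + t *\<^sub>R y)"
    using onorm[OF f(1)] by (metis abs_le_D1 real_norm_def)
  finally show "norm x \<le> norm (x + t *\<^sub>R y)"
    using f(2) by simp
qed

lemma support_functional_pos:
  assumes "f \<in> support_functionals x" and "norm (x - v) < norm x"
  shows "f v > 0"
proof -
  from assms(1) have f: "bounded_linear f" "onorm f = 1" "f x = norm x"
    unfolding support_functionals_def by auto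
  interpret f: bounded_linear f by fact
  have "f (x - v) \<le> norm (x - v)"
    using onorm[OF f(1)] f(2) by (metis abs_le_D1 mult_1 real_norm_def)
  moreover have "f v = norm x - f (x - v)"
    using f(3) by (simp add: f.diff)
  ultimately show ?thesis
    using assms(2) by linarith
qed

lemma preserves_bj_at_imp_eq_0:
  assumes "linear T" and "preserves_bj_at T x"
    and "f \<in> support_functionals x" and "f v \<noteq> 0" and "T v = 0"
  shows "T x = 0"
proof (cases "x = 0")
  case False
  interpret T: linear T by fact
  from assms(3) have f: "bounded_linear f" "f x = norm x"
    unfolding support_functionals_def by auto
  interpret f: bounded_linear f by fact
  define a where "a = f v / norm x"
  have "a \<noteq> 0"
    using assms(4) False by (simp add: a_def)
  have "f (v - a *\<^sub>R x) = 0"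
    using f(2) False by (simp add: f.diff f.scale a_def)
  then have "bj_orth x (v - a *\<^sub>R x)"
    by (rule bj_orth_if_support_functional_eq_0[OF assms(3)])
  then have "bj_orth (T x) (T (v - a *\<^sub>R x))"
    using assms(2) unfolding preserves_bj_at_def by blast
  then have "bj_orth (T x) ((- a) *\<^sub>R T x)"
    using assms(5) by (simp add: T.diff T.scale)
  then show ?thesis
    by (rule bj_orth_scaleR_self) (simp add: \<open>a \<noteq> 0\<close>)
qed (simp add: linear_0[OF assms(1)])

lemma preserves_bj_at_smooth_point_near_kernel:
  assumes "linear T" and "preserves_bj_at T x" and "smooth_point x"
    and "T v = 0" and "norm (x - v) < norm x"
  shows "T x = 0"
proof -
  from assms(3) obtain f where f: "f \<in> support_functionals x"
    unfolding smooth_point_def by auto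
  have "f v \<noteq> 0"
    using support_functional_pos[OF f assms(5)] by linarith
  then show ?thesis
    by (rule preserves_bj_at_imp_eq_0[OF assms(1,2) f _ assms(4)])
qed

lemma continuous_eq_on_open_if_eq_on_dense:
  fixes f :: "'a::topological_space \<Rightarrow> 'b::t2_space"
  assumes "continuous_on UNIV f" and "closure S = UNIV" and "open U"
    and "\<And>x. x \<in> U \<inter> S \<Longrightarrow> f x = c" and "x \<in> U"
  shows "f x = c"
proof -
  have "closed {x. f x = c}"
    using assms(1) by (intro closed_Collect_eq continuous_on_const) auto
  then have "closure (U \<inter> S) \<subseteq> {x. f x = c}"
    using assms(4) by (intro closure_minimal) auto
  moreover have "U \<subseteq> closure (U \<inter> S)"
    using open_Int_closure_subset[OF assms(3), of S] assms(2) by simp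
  ultimately show ?thesis
    using assms(5) by blast
qed

lemma linear_eq_0_if_eq_0_on_ball:
  fixes v :: "'a::real_normed_vector"
  assumes "linear T" and "r > 0" and "\<And>z. z \<in> ball v r \<Longrightarrow> T z = 0"
  shows "T w = 0"
proof -
  interpret T: linear T by fact
  have "norm w + 1 > 0"
    using norm_ge_zero[of w] by linarith
  define s where "s = r / (norm w + 1)"
  have "s > 0"
    using assms(2) \<open>norm w + 1 > 0\<close> by (simp add: s_def)
  have "norm (s *\<^sub>R w) = s * norm w"
    using \<open>s > 0\<close> by simp
  also have "\<dots> < s * (norm w + 1)"
    using \<open>s > 0\<close> by simp
  also have "\<dots> = r"
    using \<open>norm w + 1 > 0\<close> by (simp add: s_def)
  finally have "T (v + s *\<^sub>R w) = 0" and "T v = 0"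
    using assms(2,3) by (simp_all add: dist_norm)
  then show ?thesis
    using \<open>s > 0\<close> by (simp add: T.add T.scale)
qed

theorem mainTheorem4:
  fixes T :: "'a::banach \<Rightarrow> 'b::banach"
  assumes "closure (smooth_points :: 'a set) = UNIV"
    and "bounded_linear T"
    and "T \<noteq> (\<lambda>x. 0)"
    and "\<forall>x \<in> smooth_points. preserves_bj_at T x"
  shows "inj T"
proof -
  interpret T: bounded_linear T by fact
  have "v = 0" if "T v = 0" for v
  proof (rule ccontr)
    assume "v \<noteq> 0"
    let ?U = "ball v (norm v / 2)"
    have "T x = 0" if x: "x \<in> ?U \<inter> smooth_points" for x
    proof (rule preserves_bj_at_smooth_point_near_kernel[OF T.linear _ _ \<open>T v = 0\<close>])
      show "preserves_bj_at T x" and "smooth_point x"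
        using assms(4) x by (auto simp: smooth_points_def)
      show "norm (x - v) < norm x"
        using x norm_triangle_ineq2[of v x] by (simp add: dist_norm norm_minus_commute)
    qed
    then have vanish_on_ball: "T z = 0" if "z \<in> ?U" for z
      by (rule continuous_eq_on_open_if_eq_on_dense
          [OF T.continuous_on[OF continuous_on_id] assms(1) open_ball _ that])
    have "T w = 0" for w
      by (rule linear_eq_0_if_eq_0_on_ball[OF T.linear, of "norm v / 2" v])
        (simp_all add: \<open>v \<noteq> 0\<close> vanish_on_ball)
    with assms(3) show False
      by auto
  qed
  then show ?thesis
    by (simp add: linear_injective_0 T.linear)
qed

end
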